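(* Under the absolute loss $\ell(\hat y,y)=|\hat y-y|$: (i) for all integers $d,K\ge1$ and $T$ with $8Kd\log(2Kd)\le T$, there exist an instance space $\mathcal X$ and a class $\mathcal H\subset\{0,1\}^{\mathcal X}$ with $\mathsf{VC}(\mathcal H)\le d$ such that $\tilde r_T(\mathcal H,\mathsf U_K^1)\ge\sqrt{KdT/64}$; (ii) there is an absolute constant $c>0$ such that for the class of threshold functions $\mathcal H=\{x\mapsto 1\{x\ge a\}:a\in[0,1]\}$ on $\mathcal X=[0,1]$ and all $1\le K\le T$, $\tilde r_T(\mathcal H,\mathsf U_K^1)\ge c\sqrt{KT}$.
   Context: Predictions lie in $[0,1]$, labels in $\{0,1\}$. For a loss $\ell$, a class $\mathcal H$ of functions $\mathcal X\to[0,1]$ and a class $\mathsf P$ of distributions on $\mathcal X^T$, $$\tilde r_T(\mathcal H,\mathsf P)=\inf_{\phi^T}\sup_{\boldsymbol\nu^T\in\mathsf P}\mathbb E_{\mathbf x^T\sim\boldsymbol\nu^T}\Big[\sup_{y^T\in\{0,1\}^T}\Big(\sum_{t=1}^T\ell(\phi_t(\mathbf x^t,y^{t-1}),y_t)-\inf_{h\in\mathcal H}\sum_{t=1}^T\ell(h(\mathbf x_t),y_t)\Big)\Big],$$ with $\phi_t:\mathcal X^t\times\{0,1\}^{t-1}\to[0,1]$ deterministic prediction rules. For a process $X^T$ let $\nu_t(\cdot\mid X^{t-1})$ be the conditional law of $X_t$ given $X_1,\dots,X_{t-1}$. $\mathsf U_K^1$ is the class of all processes on $\mathcal X^T$ for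 which almost surely the set $\{\nu_t(\cdot\mid X^{t-1}):t\in[T]\}$ has at most $K$ distinct elements. *)

theory Defs
  imports "HOL-Probability.Probability"
begin

text \<open>Hypothesis classes are sets of real-valued functions on the instance type;
  the instance space itself is a measurable space M with carrier X = space M.
  Time indices are 0-based: a length-T sequence is a function on {..<T}.\<close>

definition binary_class :: "'a set \<Rightarrow> ('a \<Rightarrow> real) set \<Rightarrow> bool" where
  "binary_class X H \<longleftrightarrow> (\<forall>h\<in>H. \<forall>x\<in>X. h x \<in> {0, 1})"

definition shatters :: "('a \<Rightarrow> real) set \<Rightarrow> 'a set \<Rightarrow> bool" where
  "shatters H S \<longleftrightarrow> (\<forall>S'\<subseteq>S. \<exists>h\<in>H. \<forall>x\<in>S. (h x = 1 \<longleftrightarrow> x \<in> S'))"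

definition VC_le :: "'a set \<Rightarrow> ('a \<Rightarrow> real) set \<Rightarrow> nat \<Rightarrow> bool" where
  "VC_le X H d \<longleftrightarrow> (\<forall>S. S \<subseteq> X \<and> finite S \<and> shatters H S \<longrightarrow> card S \<le> d)"

definition seq_space :: "'a measure \<Rightarrow> nat \<Rightarrow> (nat \<Rightarrow> 'a) measure" where
  "seq_space M T = PiM {..<T} (\<lambda>_. M)"

text \<open>kappa t is (a version of) the conditional law of X_t given X_0..X_{t-1} under nu.\<close>
definition conditional_laws ::
  "'a measure \<Rightarrow> nat \<Rightarrow> (nat \<Rightarrow> 'a) measure \<Rightarrow> (nat \<Rightarrow> (nat \<Rightarrow> 'a) \<Rightarrow> 'a measure) \<Rightarrow> bool" where
  "conditional_laws M T \<nu> \<kappa> \<longleftrightarrow>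
     (\<forall>t<T. \<kappa> t \<in> seq_space M t \<rightarrow>\<^sub>M prob_algebra M \<and>
        (\<forall>A\<in>sets (seq_space M t). \<forall>B\<in>sets M.
           emeasure \<nu> {x\<in>space \<nu>. restrict x {..<t} \<in> A \<and> x t \<in> B}
           = (\<integral>\<^sup>+ x. indicator A (restrict x {..<t}) * emeasure (\<kappa> t (restrict x {..<t})) B \<partial>\<nu>)))"

definition U_K1 :: "'a measure \<Rightarrow> nat \<Rightarrow> nat \<Rightarrow> (nat \<Rightarrow> 'a) measure set" where
  "U_K1 M T K = {\<nu>. prob_space \<nu> \<and> sets \<nu> = sets (seq_space M T) \<and>
     (\<exists>\<kappa>. conditional_laws M T \<nu> \<kappa> \<and>
        (AE x in \<nu>. card ((\<lambda>t. \<kappa> t (restrict x {..<t})) ` {..<T}) \<le> K))}"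

text \<open>Deterministic prediction rules: phi t x y is the prediction at time t, it is
  only ever applied to x restricted to {..t} and y restricted to {..<t}.\<close>
definition learners :: "(nat \<Rightarrow> (nat \<Rightarrow> 'a) \<Rightarrow> (nat \<Rightarrow> real) \<Rightarrow> real) set" where
  "learners = {\<phi>. \<forall>t x y. \<phi> t x y \<in> {0..1}}"

definition abs_regret ::
  "('a \<Rightarrow> real) set \<Rightarrow> nat \<Rightarrow> (nat \<Rightarrow> (nat \<Rightarrow> 'a) \<Rightarrow> (nat \<Rightarrow> real) \<Rightarrow> real)
    \<Rightarrow> (nat \<Rightarrow> 'a) \<Rightarrow> (nat \<Rightarrow> real) \<Rightarrow> ereal" where
  "abs_regret H T \<phi> x y =
     ereal (\<Sum>t<T. \<bar>\<phi> t (restrict x {..t}) (restrict y {..<t}) - y t\<bar>)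
     - (INF h\<in>H. ereal (\<Sum>t<T. \<bar>h (x t) - y t\<bar>))"

definition worst_regret ::
  "('a \<Rightarrow> real) set \<Rightarrow> nat \<Rightarrow> (nat \<Rightarrow> (nat \<Rightarrow> 'a) \<Rightarrow> (nat \<Rightarrow> real) \<Rightarrow> real)
    \<Rightarrow> (nat \<Rightarrow> 'a) \<Rightarrow> ereal" where
  "worst_regret H T \<phi> x = (SUP y\<in>PiE {..<T} (\<lambda>_. {0, 1}). abs_regret H T \<phi> x y)"

definition minimax_regret :: "'a measure \<Rightarrow> ('a \<Rightarrow> real) set \<Rightarrow> nat \<Rightarrow> nat \<Rightarrow> ennreal" where
  "minimax_regret M H T K =
     (INF \<phi>\<in>learners. SUP \<nu>\<in>U_K1 M T K. \<integral>\<^sup>+ x. e2ennreal (worst_regret H T \<phi> x) \<partial>\<nu>)"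

definition threshold_class :: "(real \<Rightarrow> real) set" where
  "threshold_class = {(\<lambda>x. if a \<le> x then 1 else 0) | a. a \<in> {0..1}}"

end

theory Submission
  imports Defs
begin

text \<open>Split the \<open>T\<close> rounds into \<open>K\<close> epochs and give each round a uniformly random color among \<open>d\<close>.
  Labels are uniform random bits, so every learner errs with probability \<open>1/2\<close> in each round. A round of
  color \<open>i\<close> in epoch \<open>j\<close> is placed at the \<open>j\<close>-th query of a binary search driven by the majority labels
  of color \<open>i\<close> in the earlier epochs, so a single threshold per color predicts the majority label of
  every (epoch, color) cell. The comparator therefore beats \<open>T/2\<close> by half the absolute spin sums of the
  cells, and a fourth-moment bound shows each of these is of order \<open>sqrt (T / (K d))\<close> on average; summing
  over the \<open>K d\<close> cells gives \<open>sqrt (K d T)\<close>. Given the past, the next instance is uniform over \<open>d\<close>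
  points that depend on the round only through its epoch, so the process has at most \<open>K\<close> conditional
  laws. With \<open>d = 1\<close> the instances are deterministic dyadic points of \<open>[0,1]\<close>, which gives the
  bound for thresholds.\<close>

lemma sum_PiE_fun_upd_average:
  fixes f :: "('i \<Rightarrow> 'b) \<Rightarrow> real"
  assumes "finite I" "a \<in> I" "finite S" "S \<noteq> {}"
  shows "(\<Sum>y\<in>PiE I (\<lambda>_. S). f y) = (\<Sum>y\<in>PiE I (\<lambda>_. S). \<Sum>s\<in>S. f (y(a:=s))) / card S"
proof -
  let ?Y = "PiE I (\<lambda>_. S)"
  have group: "(\<Sum>y\<in>?Y. g y) = (\<Sum>u\<in>S. \<Sum>y\<in>{y\<in>?Y. y a = u}. g y)" for g :: "('i \<Rightarrow> 'b) \<Rightarrow> real"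
    using assms by (subst sum.group[symmetric, of ?Y S "\<lambda>y. y a" g]) (auto simp: finite_PiE)
  have shift: "(\<Sum>y\<in>{y\<in>?Y. y a = u}. f (y(a:=s))) = (\<Sum>y\<in>{y\<in>?Y. y a = s}. f y)"
    if "s \<in> S" "u \<in> S" for s u
    by (rule sum.reindex_bij_witness[of _ "\<lambda>z. z(a:=u)" "\<lambda>y. y(a:=s)"])
      (use assms that in \<open>auto simp: PiE_iff extensional_def\<close>)
  have "(\<Sum>y\<in>?Y. \<Sum>s\<in>S. f (y(a:=s))) = (\<Sum>s\<in>S. \<Sum>u\<in>S. \<Sum>y\<in>{y\<in>?Y. y a = u}. f (y(a:=s)))"
    by (subst sum.swap) (simp add: group)
  also have "\<dots> = card S * (\<Sum>s\<in>S. \<Sum>y\<in>{y\<in>?Y. y a = s}. f y)"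
    by (simp add: shift sum_distrib_left)
  also have "\<dots> = card S * (\<Sum>y\<in>?Y. f y)"
    by (simp add: group)
  finally show ?thesis
    using assms by (simp add: card_gt_0_iff)
qed

definition spin :: "('i \<Rightarrow> real) \<Rightarrow> 'i \<Rightarrow> real" where
  "spin y t = 2 * y t - 1"

definition spin_sum :: "'i set \<Rightarrow> ('i \<Rightarrow> real) \<Rightarrow> real" where
  "spin_sum C y = (\<Sum>t\<in>C. spin y t)"

lemma sum_PiE_spin_resample:
  fixes h :: "real \<Rightarrow> real \<Rightarrow> real"
  assumes "finite I" "a \<in> I" "a \<notin> C"
  shows "(\<Sum>y\<in>PiE I (\<lambda>_. {0,1}). h (spin y a) (spin_sum C y))
       = (\<Sum>y\<in>PiE I (\<lambda>_. {0,1}). h (-1) (spin_sum C y) + h 1 (spin_sum C y)) / 2"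
proof -
  have "spin_sum C (y(a:=s)) = spin_sum C y" for y s
    unfolding spin_sum_def spin_def using assms(3) by (intro sum.cong) auto
  moreover have "(\<Sum>y\<in>PiE I (\<lambda>_. {0,1}). h (spin y a) (spin_sum C y))
     = (\<Sum>y\<in>PiE I (\<lambda>_. {0,1}). \<Sum>s\<in>{0,1}. h (spin (y(a:=s)) a) (spin_sum C (y(a:=s)))) / card {0,1::real}"
    by (rule sum_PiE_fun_upd_average) (use assms in auto)
  ultimately show ?thesis
    by (simp add: spin_def)
qed

lemma spin_sum_even_moments:
  assumes "finite I" "C \<subseteq> I"
  defines "Y \<equiv> PiE I (\<lambda>_. {0,1::real})"
  shows "(\<Sum>y\<in>Y. (spin_sum C y)^2) = real (card Y) * real (card C)"
    and "(\<Sum>y\<in>Y. (spin_sum C y)^4) = real (card Y) * (3 * real (card C)^2 - 2 * real (card C))"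
proof -
  have "finite C"
    using assms finite_subset by blast
  then have "(\<Sum>y\<in>Y. (spin_sum C y)^2) = real (card Y) * real (card C)
    \<and> (\<Sum>y\<in>Y. (spin_sum C y)^4) = real (card Y) * (3 * real (card C)^2 - 2 * real (card C))"
    using assms(2)
  proof (induction C rule: finite_induct)
    case empty
    then show ?case by (simp add: spin_sum_def)
  next
    case (insert a C)
    have step: "(\<Sum>y\<in>Y. (spin_sum (insert a C) y)^k) = (\<Sum>y\<in>Y. (-1 + spin_sum C y)^k + (1 + spin_sum C y)^k) / 2"
      for k
    proof -
      have "spin_sum (insert a C) y = spin y a + spin_sum C y" for y
        unfolding spin_sum_def using insert by simp
      then show ?thesis
        unfolding Y_def using sum_PiE_spin_resample[OF assms(1) _ insert(2), of "\<lambda>e s. (e + s)^k"] insert(4)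
        by simp
    qed
    have e2: "(-1 + s)^2 + (1 + s)^2 = 2 * s^2 + 2" for s :: real
      by (simp add: power2_eq_square algebra_simps)
    have e4: "(-1 + s)^4 + (1 + s)^4 = 2 * s^4 + 12 * s^2 + 2" for s :: real
      by (simp add: power4_eq_xxxx power2_eq_square algebra_simps)
    have "(\<Sum>y\<in>Y. (spin_sum (insert a C) y)^2) = (\<Sum>y\<in>Y. (spin_sum C y)^2) + card Y"
      using step[of 2] unfolding e2 by (simp add: sum.distrib sum_distrib_left[symmetric])
    moreover have "(\<Sum>y\<in>Y. (spin_sum (insert a C) y)^4)
        = (\<Sum>y\<in>Y. (spin_sum C y)^4) + 6 * (\<Sum>y\<in>Y. (spin_sum C y)^2) + card Y"
      using step[of 4] unfolding e4 by (simp add: sum.distrib sum_distrib_left[symmetric])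
    ultimately show ?case
      using insert by (simp add: algebra_simps power2_eq_square)
  qed
  then show "(\<Sum>y\<in>Y. (spin_sum C y)^2) = real (card Y) * real (card C)"
    and "(\<Sum>y\<in>Y. (spin_sum C y)^4) = real (card Y) * (3 * real (card C)^2 - 2 * real (card C))"
    by auto
qed

lemma abs_ge_quartic_minorant:
  fixes x a :: real
  assumes "a \<ge> 0"
  shows "a * x^2 - (4 * a^3 / 27) * x^4 \<le> \<bar>x\<bar>"
proof -
  define v where "v = a * \<bar>x\<bar>"
  have "1 - v + (4/27) * v^3 = (4/27) * (v - 3/2)^2 * (v + 3)"
    by (simp add: power2_eq_square power3_eq_cube field_simps)
  also have "\<dots> \<ge> 0"
    using assms by (simp add: v_def)
  finally have "\<bar>x\<bar> * (1 - v + (4/27) * v^3) \<ge> 0"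
    by simp
  moreover have "x^2 = \<bar>x\<bar>^2" "x^4 = \<bar>x\<bar>^4"
    by (simp_all add: power_even_abs)
  ultimately show ?thesis
    by (simp add: v_def power2_eq_square power3_eq_cube power4_eq_xxxx algebra_simps)
qed

lemma sum_abs_spin_sum_ge:
  fixes a :: real
  assumes "finite I" "C \<subseteq> I" "a \<ge> 0"
  defines "Y \<equiv> PiE I (\<lambda>_. {0,1::real})"
  shows "real (card Y) * (a * card C - (4 * a^3 / 27) * (3 * real (card C)^2 - 2 * real (card C)))
    \<le> (\<Sum>y\<in>Y. \<bar>spin_sum C y\<bar>)"
proof -
  have "(\<Sum>y\<in>Y. a * (spin_sum C y)^2 - (4 * a^3 / 27) * (spin_sum C y)^4) \<le> (\<Sum>y\<in>Y. \<bar>spin_sum C y\<bar>)"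
    by (intro sum_mono abs_ge_quartic_minorant assms(3))
  moreover have "(\<Sum>y\<in>Y. a * (spin_sum C y)^2 - (4 * a^3 / 27) * (spin_sum C y)^4)
     = a * (\<Sum>y\<in>Y. (spin_sum C y)^2) - (4 * a^3 / 27) * (\<Sum>y\<in>Y. (spin_sum C y)^4)"
    by (simp add: sum_subtractf sum_distrib_left)
  ultimately show ?thesis
    using spin_sum_even_moments[OF assms(1,2)] unfolding Y_def by (simp add: algebra_simps)
qed

definition color_count :: "'i set \<Rightarrow> ('i \<Rightarrow> nat) \<Rightarrow> nat \<Rightarrow> real" where
  "color_count C w i = card {t\<in>C. w t = i}"

lemma color_count_moments:
  assumes "finite I" "C \<subseteq> I" "i < d"
  defines "W \<equiv> PiE I (\<lambda>_. {..<d})"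
  shows "(\<Sum>w\<in>W. color_count C w i) = real (card W) * real (card C) / real d"
    and "(\<Sum>w\<in>W. (color_count C w i)^2) = real (card W) * (real (card C) / real d + real (card C) * (real (card C) - 1) / real d ^ 2)"
proof -
  have "finite C"
    using assms finite_subset by blast
  then have "(\<Sum>w\<in>W. color_count C w i) = real (card W) * real (card C) / real d
    \<and> (\<Sum>w\<in>W. (color_count C w i)^2) = real (card W) * (real (card C) / real d + real (card C) * (real (card C) - 1) / real d ^ 2)"
    using assms(2)
  proof (induction C rule: finite_induct)
    case empty
    then show ?case by (simp add: color_count_def)
  next
    case (insert a C)
    let ?n = "\<lambda>w. color_count C w i"
    have average: "(\<Sum>w\<in>W. f w) = (\<Sum>w\<in>W. \<Sum>u<d. f (w(a:=u))) / d" for f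
      using sum_PiE_fun_upd_average[OF assms(1), of a "{..<d}" f] insert(4) assms(3) unfolding W_def by auto
    have count_upd: "color_count (insert a C) (w(a:=u)) i = (if u = i then 1 else 0) + ?n w" for w u
    proof -
      have "{t\<in>insert a C. (w(a:=u)) t = i} = (if u = i then insert a {t\<in>C. w t = i} else {t\<in>C. w t = i})"
        using insert(2) by auto
      then show ?thesis
        unfolding color_count_def using insert(1,2) by auto
    qed
    have indicator_sum: "(\<Sum>u<d. (if u = i then 1 else 0::real)) = 1"
      using assms(3) by simp
    have "(\<Sum>u<d. color_count (insert a C) (w(a:=u)) i) = 1 + d * ?n w" for w
      unfolding count_upd by (simp add: sum.distrib indicator_sum)
    then have s1: "(\<Sum>w\<in>W. color_count (insert a C) w i) = (card W + d * (\<Sum>w\<in>W. ?n w)) / d"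
      by (subst average) (simp add: sum.distrib sum_distrib_left)
    have "((if u = i then 1 else 0) + ?n w)^2 = (if u = i then 1 else 0) * (1 + 2 * ?n w) + (?n w)^2" for u w
      by (simp add: power2_eq_square algebra_simps)
    then have "(\<Sum>u<d. (color_count (insert a C) (w(a:=u)) i)^2) = 1 + 2 * ?n w + d * (?n w)^2" for w
      unfolding count_upd by (simp add: sum.distrib sum_distrib_right[symmetric] indicator_sum)
    then have s2: "(\<Sum>w\<in>W. (color_count (insert a C) w i)^2) = (card W + 2 * (\<Sum>w\<in>W. ?n w) + d * (\<Sum>w\<in>W. (?n w)^2)) / d"
      by (subst average) (simp add: sum.distrib sum_distrib_left)
    have IH: "(\<Sum>w\<in>W. ?n w) = real (card W) * real (card C) / real d"
      "(\<Sum>w\<in>W. (?n w)^2) = real (card W) * (real (card C) / real d + real (card C) * (real (card C) - 1) / real d ^ 2)"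
      using insert by auto
    show ?case
      using insert assms(3) unfolding s1 s2 IH by (simp add: field_simps power2_eq_square)
  qed
  then show "(\<Sum>w\<in>W. color_count C w i) = real (card W) * real (card C) / real d"
    and "(\<Sum>w\<in>W. (color_count C w i)^2) = real (card W) * (real (card C) / real d + real (card C) * (real (card C) - 1) / real d ^ 2)"
    by auto
qed

lemma quartic_minorant_at_inverse_sqrt_ge:
  fixes m \<mu> q :: real
  assumes "0 < m" "m \<le> \<mu>" "0 \<le> q" "q \<le> \<mu>^2"
  shows "(5/9) * sqrt m - 4 / (27 * sqrt m) \<le> (1 / sqrt \<mu>) * \<mu> - (4 * (1 / sqrt \<mu>)^3 / 27) * (\<mu> + 3 * q)"
proof -
  define s where "s = sqrt \<mu>"
  have r0: "sqrt m > 0" and rs: "sqrt m \<le> s"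
    using assms unfolding s_def by simp_all
  then have s0: "s > 0" by linarith
  have mu: "\<mu> = s^2"
    unfolding s_def using assms by simp
  have "(4 * (1/s)^3 / 27) * (\<mu> + 3 * q) \<le> (4 * (1/s)^3 / 27) * (s^2 + 3 * s^4)"
    using assms s0 unfolding mu by (intro mult_left_mono) (auto simp: power_mult[symmetric])
  also have "\<dots> = 4 / (27 * s) + (4/9) * s"
    using s0 by (simp add: field_simps power2_eq_square power3_eq_cube power4_eq_xxxx)
  finally have "(5/9) * s - 4 / (27 * s) \<le> (1/s) * \<mu> - (4 * (1/s)^3 / 27) * (\<mu> + 3 * q)"
    using s0 unfolding mu by (simp add: power2_eq_square)
  moreover have "4 / (27 * s) \<le> 4 / (27 * sqrt m)"
    using r0 rs by (simp add: frac_le)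
  ultimately show ?thesis
    using rs unfolding s_def by linarith
qed

lemma sum_quartic_minorant_color_count:
  fixes \<alpha> :: real and i d :: nat
  assumes "finite I" "C \<subseteq> I" "i < d"
  defines "W \<equiv> PiE I (\<lambda>_. {..<d})" and "\<mu> \<equiv> card C / d" and "q \<equiv> card C * (real (card C) - 1) / d^2"
  shows "(\<Sum>w\<in>W. \<alpha> * color_count C w i - (4 * \<alpha>^3 / 27) * (3 * (color_count C w i)^2 - 2 * color_count C w i))
    = card W * (\<alpha> * \<mu> - (4 * \<alpha>^3 / 27) * (\<mu> + 3 * q))"
proof -
  have S1: "(\<Sum>w\<in>W. color_count C w i) = card W * \<mu>"
    and S2: "(\<Sum>w\<in>W. (color_count C w i)^2) = card W * (\<mu> + q)"
    using color_count_moments[OF assms(1-3)] unfolding \<mu>_def q_def W_def by (simp_all add: power2_eq_square)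
  have "(\<Sum>w\<in>W. \<alpha> * color_count C w i - (4 * \<alpha>^3 / 27) * (3 * (color_count C w i)^2 - 2 * color_count C w i))
      = \<alpha> * (\<Sum>w\<in>W. color_count C w i)
        - (4 * \<alpha>^3 / 27) * (3 * (\<Sum>w\<in>W. (color_count C w i)^2) - 2 * (\<Sum>w\<in>W. color_count C w i))"
    by (simp add: sum_subtractf sum_distrib_left sum_divide_distrib right_diff_distrib)
  also have "\<dots> = card W * (\<alpha> * \<mu> - (4 * \<alpha>^3 / 27) * (\<mu> + 3 * q))"
    unfolding S1 S2 by (simp add: algebra_simps)
  finally show ?thesis .
qed

lemma sum_abs_spin_sum_color_ge:
  fixes m :: real and i d :: nat
  assumes "finite I" "C \<subseteq> I" "i < d" "0 < m" "m \<le> card C / d"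
  defines "W \<equiv> PiE I (\<lambda>_. {..<d})" and "Y \<equiv> PiE I (\<lambda>_. {0,1::real})"
  shows "card W * card Y * ((5/9) * sqrt m - 4 / (27 * sqrt m))
    \<le> (\<Sum>w\<in>W. \<Sum>y\<in>Y. \<bar>spin_sum {t\<in>C. w t = i} y\<bar>)"
proof -
  define n where "n w = color_count C w i" for w
  define \<mu> where "\<mu> = card C / d"
  define q where "q = card C * (real (card C) - 1) / d^2"
  \<comment> \<open>The minorant is tuned to the typical size \<open>sqrt \<mu>\<close> of the spin sum of a color class.\<close>
  define \<alpha> where "\<alpha> = 1 / sqrt \<mu>"
  have "\<mu> > 0"
    using assms(4,5) unfolding \<mu>_def by linarith
  have "(\<Sum>w\<in>W. card Y * (\<alpha> * n w - (4 * \<alpha>^3 / 27) * (3 * (n w)^2 - 2 * n w)))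
      \<le> (\<Sum>w\<in>W. \<Sum>y\<in>Y. \<bar>spin_sum {t\<in>C. w t = i} y\<bar>)"
  proof (rule sum_mono)
    fix w
    have "{t\<in>C. w t = i} \<subseteq> I"
      using assms(2) by auto
    then show "card Y * (\<alpha> * n w - (4 * \<alpha>^3 / 27) * (3 * (n w)^2 - 2 * n w))
        \<le> (\<Sum>y\<in>Y. \<bar>spin_sum {t\<in>C. w t = i} y\<bar>)"
      using sum_abs_spin_sum_ge[OF assms(1), of "{t\<in>C. w t = i}" \<alpha>] \<open>\<mu> > 0\<close>
      unfolding Y_def n_def color_count_def \<alpha>_def by simp
  qed
  moreover have "(\<Sum>w\<in>W. card Y * (\<alpha> * n w - (4 * \<alpha>^3 / 27) * (3 * (n w)^2 - 2 * n w)))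
      = card Y * (card W * (\<alpha> * \<mu> - (4 * \<alpha>^3 / 27) * (\<mu> + 3 * q)))"
    using sum_quartic_minorant_color_count[OF assms(1-3), of \<alpha>]
    unfolding n_def \<mu>_def q_def W_def by (simp add: sum_distrib_left[symmetric])
  moreover have "(5/9) * sqrt m - 4 / (27 * sqrt m) \<le> \<alpha> * \<mu> - (4 * \<alpha>^3 / 27) * (\<mu> + 3 * q)"
    unfolding \<alpha>_def
  proof (rule quartic_minorant_at_inverse_sqrt_ge)
    have "1 \<le> card C"
      using assms(3-5) by (cases "card C") (auto simp: field_simps)
    then show "0 < m" "m \<le> \<mu>" "0 \<le> q" "q \<le> \<mu>^2"
      using assms(4,5) unfolding \<mu>_def q_def
      by (simp_all add: power_divide power2_eq_square divide_right_mono mult_left_mono)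
  qed
  then have "real (card Y * card W) * ((5/9) * sqrt m - 4 / (27 * sqrt m))
      \<le> real (card Y * card W) * (\<alpha> * \<mu> - (4 * \<alpha>^3 / 27) * (\<mu> + 3 * q))"
    by (rule mult_left_mono) simp
  then have "card W * card Y * ((5/9) * sqrt m - 4 / (27 * sqrt m))
      \<le> card Y * (card W * (\<alpha> * \<mu> - (4 * \<alpha>^3 / 27) * (\<mu> + 3 * q)))"
    by (simp add: mult.commute mult.left_commute)
  ultimately show ?thesis
    by linarith
qed

lemma sum_abs_loss_of_unseen_label:
  fixes P :: "nat \<Rightarrow> (nat \<Rightarrow> real) \<Rightarrow> real"
  assumes "\<And>t y. P t y \<in> {0..1}"
    and "\<And>t y s. t < T \<Longrightarrow> P t (y(t:=s)) = P t y"
  defines "Y \<equiv> PiE {..<T} (\<lambda>_. {0,1::real})"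
  shows "(\<Sum>y\<in>Y. \<Sum>t<T. \<bar>P t y - y t\<bar>) = card Y * T / 2"
proof -
  have "(\<Sum>y\<in>Y. \<bar>P t y - y t\<bar>) = card Y / 2" if t: "t < T" for t
  proof -
    have "(\<Sum>s\<in>{0,1}. \<bar>P t (y(t:=s)) - (y(t:=s)) t\<bar>) = 1" for y
      using assms(1)[of t y] assms(2)[OF t] by simp
    moreover have "(\<Sum>y\<in>Y. \<bar>P t y - y t\<bar>) = (\<Sum>y\<in>Y. \<Sum>s\<in>{0,1}. \<bar>P t (y(t:=s)) - (y(t:=s)) t\<bar>) / card {0,1::real}"
      unfolding Y_def by (rule sum_PiE_fun_upd_average) (use t in auto)
    ultimately show ?thesis
      by simp
  qed
  then have "(\<Sum>t<T. \<Sum>y\<in>Y. \<bar>P t y - y t\<bar>) = (\<Sum>t<T. card Y / 2)"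
    by (intro sum.cong) auto
  then show ?thesis
    by (subst sum.swap) simp
qed

lemma exists_ge_average:
  fixes f :: "'a \<Rightarrow> real" and B :: real
  assumes "finite Y" "Y \<noteq> {}" "card Y * B \<le> (\<Sum>y\<in>Y. f y)"
  shows "\<exists>y\<in>Y. B \<le> f y"
proof (rule ccontr)
  assume "\<not> ?thesis"
  then have "(\<Sum>y\<in>Y. f y) < (\<Sum>y\<in>Y. B)"
    using assms by (intro sum_strict_mono) auto
  then show False
    using assms by simp
qed

lemma card_le_if_subset_image_lessThan:
  assumes "A \<subseteq> f ` {..<n}"
  shows "card A \<le> n"
proof -
  have "card A \<le> card (f ` {..<n})"
    using assms by (intro card_mono) auto
  also have "\<dots> \<le> n"
    using card_image_le[of "{..<n}" f] by simp
  finally show ?thesis .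
qed

lemma ennreal_le_average:
  fixes R :: "'a \<Rightarrow> real" and B :: real
  assumes "finite W" "W \<noteq> {}" "card W * B \<le> (\<Sum>w\<in>W. R w)" "\<And>w. w \<in> W \<Longrightarrow> ennreal (R w) \<le> f w"
  shows "ennreal B \<le> (\<Sum>w\<in>W. f w) / of_nat (card W)"
proof (cases "B \<le> 0")
  case False
  have card: "real (card W) > 0"
    using assms(1,2) by (simp add: card_gt_0_iff)
  have "ennreal B = ennreal (card W * B) / of_nat (card W)"
    using False card by (simp add: ennreal_of_nat_eq_real_of_nat divide_ennreal)
  also have "\<dots> \<le> ennreal (\<Sum>w\<in>W. max 0 (R w)) / of_nat (card W)"
  proof (intro divide_right_mono_ennreal ennreal_leI)
    have "(\<Sum>w\<in>W. R w) \<le> (\<Sum>w\<in>W. max 0 (R w))"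
      by (intro sum_mono) simp
    then show "card W * B \<le> (\<Sum>w\<in>W. max 0 (R w))"
      using assms(3) by linarith
  qed
  also have "\<dots> = (\<Sum>w\<in>W. ennreal (R w)) / of_nat (card W)"
    by (simp add: ennreal_max_0 flip: sum_ennreal)
  also have "\<dots> \<le> (\<Sum>w\<in>W. f w) / of_nat (card W)"
    using assms(4) by (intro divide_right_mono_ennreal sum_mono) auto
  finally show ?thesis .
qed (simp add: ennreal_neg)

text \<open>Binary search for a threshold in \<open>{1..2^K}\<close>: after \<open>j\<close> answers \<open>m 0, \<dots>, m (j - 1)\<close> the
  threshold is known to lie in \<open>(lo, hi]\<close>; the answer \<open>m j\<close> tells whether it lies at or below the
  midpoint query, and after \<open>K\<close> answers it equals \<open>hi\<close>.\<close>

primrec dyadic_interval :: "nat \<Rightarrow> (nat \<Rightarrow> bool) \<Rightarrow> nat \<Rightarrow> nat \<times> nat" where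
  "dyadic_interval K m 0 = (0, 2^K)"
| "dyadic_interval K m (Suc j) =
    (if m j then (fst (dyadic_interval K m j), fst (dyadic_interval K m j) + 2^(K - Suc j))
     else (fst (dyadic_interval K m j) + 2^(K - Suc j), snd (dyadic_interval K m j)))"

definition dyadic_query :: "nat \<Rightarrow> (nat \<Rightarrow> bool) \<Rightarrow> nat \<Rightarrow> nat" where
  "dyadic_query K m j = fst (dyadic_interval K m j) + 2^(K - Suc j)"

definition dyadic_threshold :: "nat \<Rightarrow> (nat \<Rightarrow> bool) \<Rightarrow> nat" where
  "dyadic_threshold K m = snd (dyadic_interval K m K)"

lemma two_power_diff_halves: "j < K \<Longrightarrow> (2::nat)^(K - j) = 2^(K - Suc j) + 2^(K - Suc j)"
  by (metis Suc_diff_Suc mult_2 power_Suc)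

lemma dyadic_interval_width:
  "j \<le> K \<Longrightarrow> snd (dyadic_interval K m j) = fst (dyadic_interval K m j) + 2^(K - j)"
proof (induction j)
  case (Suc j)
  then have "(2::nat)^(K - j) = 2^(K - Suc j) + 2^(K - Suc j)"
    by (intro two_power_diff_halves) simp
  then show ?case
    using Suc by simp
qed simp

lemma dyadic_interval_mono:
  assumes "j \<le> j'" "j' \<le> K"
  shows "fst (dyadic_interval K m j) \<le> fst (dyadic_interval K m j')
    \<and> snd (dyadic_interval K m j') \<le> snd (dyadic_interval K m j)"
  using assms
proof (induction j' rule: dec_induct)
  case (step j')
  have "snd (dyadic_interval K m j') = fst (dyadic_interval K m j') + 2^(K - j')"
    using step by (intro dyadic_interval_width) auto
  moreover have "(2::nat)^(K - j') = 2^(K - Suc j') + 2^(K - Suc j')"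
    using step by (intro two_power_diff_halves) simp
  ultimately show ?case
    using step by auto
qed simp

lemma dyadic_threshold_le_query_iff:
  assumes "j < K"
  shows "dyadic_threshold K m \<le> dyadic_query K m j \<longleftrightarrow> m j"
proof (cases "m j")
  case True
  then have "snd (dyadic_interval K m (Suc j)) = dyadic_query K m j"
    by (simp add: dyadic_query_def)
  moreover have "snd (dyadic_interval K m K) \<le> snd (dyadic_interval K m (Suc j))"
    using dyadic_interval_mono[of "Suc j" K K m] assms by auto
  ultimately show ?thesis
    using True by (simp add: dyadic_threshold_def)
next
  case False
  then have "fst (dyadic_interval K m (Suc j)) = dyadic_query K m j"
    by (simp add: dyadic_query_def)
  moreover have "fst (dyadic_interval K m (Suc j)) \<le> fst (dyadic_interval K m K)"
    using dyadic_interval_mono[of "Suc j" K K m] assms by auto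
  moreover have "snd (dyadic_interval K m K) = fst (dyadic_interval K m K) + 1"
    using dyadic_interval_width[of K K m] by simp
  ultimately show ?thesis
    using False by (simp add: dyadic_threshold_def)
qed

lemma dyadic_query_less: "j < K \<Longrightarrow> dyadic_query K m j < 2^K"
proof -
  assume j: "j < K"
  have "snd (dyadic_interval K m j) = fst (dyadic_interval K m j) + 2^(K - j)"
    using j by (intro dyadic_interval_width) auto
  moreover have "snd (dyadic_interval K m j) \<le> 2^K"
    using dyadic_interval_mono[of 0 j K m] j by auto
  moreover have "(2::nat)^(K - Suc j) < 2^(K - j)"
    using j by (intro power_strict_increasing) auto
  ultimately show ?thesis
    unfolding dyadic_query_def by linarith
qed

lemma dyadic_threshold_le: "dyadic_threshold K m \<le> 2^K"
  using dyadic_interval_mono[of 0 K K m] by (simp add: dyadic_threshold_def)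

lemma dyadic_interval_cong:
  "(\<And>k. k < j \<Longrightarrow> m k = m' k) \<Longrightarrow> dyadic_interval K m j = dyadic_interval K m' j"
  by (induction j) auto

lemma dyadic_query_cong:
  "(\<And>k. k < j \<Longrightarrow> m k = m' k) \<Longrightarrow> dyadic_query K m j = dyadic_query K m' j"
  unfolding dyadic_query_def using dyadic_interval_cong[of j m m' K] by simp

text \<open>Half the per-cell bound of \<open>sum_abs_spin_sum_color_ge\<close> with \<open>m = L / d\<close>, summed over \<open>K d\<close> cells.\<close>

definition epoch_regret_bound :: "nat \<Rightarrow> nat \<Rightarrow> nat \<Rightarrow> real" where
  "epoch_regret_bound K L d = K * d * ((5/18) * sqrt (L / d) - 2 / (27 * sqrt (L / d)))"

text \<open>The hard instances: round \<open>t < T\<close> carries one of \<open>d\<close> colors \<open>w t\<close> and lies in one of \<open>K\<close>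
  epochs of length \<open>L\<close> (the last epoch absorbs the remaining rounds).\<close>

locale epoch_construction =
  fixes K L T d :: nat
  assumes K_pos: "1 \<le> K" and L_pos: "1 \<le> L" and d_pos: "1 \<le> d" and epochs_fit: "K * L \<le> T"
begin

abbreviation colorings :: "(nat \<Rightarrow> nat) set" where
  "colorings \<equiv> PiE {..<T} (\<lambda>_. {..<d})"

abbreviation labelings :: "(nat \<Rightarrow> real) set" where
  "labelings \<equiv> PiE {..<T} (\<lambda>_. {0,1})"

definition epoch :: "nat \<Rightarrow> nat" where
  "epoch t = min (t div L) (K - 1)"

definition epoch_rounds :: "nat \<Rightarrow> nat set" where
  "epoch_rounds j = {t. t < T \<and> epoch t = j}"

definition cell :: "(nat \<Rightarrow> nat) \<Rightarrow> nat \<Rightarrow> nat \<Rightarrow> nat set" where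
  "cell w j i = {t\<in>epoch_rounds j. w t = i}"

definition majority :: "(nat \<Rightarrow> real) \<Rightarrow> (nat \<Rightarrow> nat) \<Rightarrow> nat \<Rightarrow> nat \<Rightarrow> bool" where
  "majority y w j i \<longleftrightarrow> 0 \<le> spin_sum (cell w j i) y"

definition position :: "(nat \<Rightarrow> real) \<Rightarrow> (nat \<Rightarrow> nat) \<Rightarrow> nat \<Rightarrow> nat \<Rightarrow> nat" where
  "position y w i t = dyadic_query K (\<lambda>j. majority y w j i) (epoch t)"

definition majority_label :: "(nat \<Rightarrow> real) \<Rightarrow> (nat \<Rightarrow> nat) \<Rightarrow> nat \<Rightarrow> real" where
  "majority_label y w t = (if majority y w (epoch t) (w t) then 1 else 0)"

lemma epoch_less: "epoch t < K"
  using K_pos unfolding epoch_def by auto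

lemma epoch_mono: "s \<le> t \<Longrightarrow> epoch s \<le> epoch t"
  unfolding epoch_def by (simp add: div_le_mono min.coboundedI1 min_le_iff_disj)

lemma card_epoch_rounds_ge:
  assumes "j < K"
  shows "L \<le> card (epoch_rounds j)"
proof -
  have "{j*L..<j*L+L} \<subseteq> epoch_rounds j"
  proof
    fix t assume t: "t \<in> {j*L..<j*L+L}"
    then have "t div L = j"
      by (metis atLeastLessThan_iff div_nat_eqI mult.commute add.commute mult_Suc_right)
    moreover have "j * L + L \<le> K * L"
      using assms by (metis Suc_leI add.commute mult_Suc mult_le_mono1)
    ultimately show "t \<in> epoch_rounds j"
      using t assms epochs_fit unfolding epoch_rounds_def epoch_def by auto
  qed
  moreover have "finite (epoch_rounds j)"
    unfolding epoch_rounds_def by auto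
  ultimately show ?thesis
    by (metis card_atLeastLessThan card_mono add_diff_cancel_left')
qed

lemma majority_cong:
  assumes "j < epoch u" "\<And>s. s < u \<Longrightarrow> y' s = y s" "\<And>s. s < u \<Longrightarrow> w' s = w s"
  shows "majority y' w' j i = majority y w j i"
proof -
  have early: "s < u" if "epoch s = j" for s
    using epoch_mono[of u s] assms(1) that by (meson not_le)
  then have "cell w' j i = cell w j i"
    unfolding cell_def epoch_rounds_def using assms(3) by auto
  moreover have "spin_sum (cell w j i) y' = spin_sum (cell w j i) y"
    unfolding spin_sum_def spin_def cell_def epoch_rounds_def using early assms(2) by (intro sum.cong) auto
  ultimately show ?thesis
    unfolding majority_def by simp
qed

lemma position_cong:
  assumes "\<And>s. s < t \<Longrightarrow> y' s = y s" "\<And>s. s < t \<Longrightarrow> w' s = w s"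
  shows "position y' w' i t = position y w i t"
  unfolding position_def by (rule dyadic_query_cong) (rule majority_cong[OF _ assms], auto)

lemma majority_label_eq_threshold:
  "majority_label y w t =
    (if dyadic_threshold K (\<lambda>j. majority y w j (w t)) \<le> position y w (w t) t then 1 else 0)"
  unfolding majority_label_def position_def using dyadic_threshold_le_query_iff[OF epoch_less] by simp

lemma comparator_loss_eq:
  assumes y: "y \<in> labelings" and w: "w \<in> colorings"
  shows "(\<Sum>t<T. \<bar>majority_label y w t - y t\<bar>) = T/2 - (1/2) * (\<Sum>j<K. \<Sum>i<d. \<bar>spin_sum (cell w j i) y\<bar>)"
proof -
  define sg where "sg t = (if majority y w (epoch t) (w t) then 1 else -1::real)" for t
  have "\<bar>majority_label y w t - y t\<bar> = 1/2 - sg t * spin y t / 2" if "t < T" for t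
  proof -
    have "y t = 0 \<or> y t = 1"
      using y that by (auto simp: PiE_iff)
    then show ?thesis
      unfolding majority_label_def sg_def spin_def by auto
  qed
  then have "(\<Sum>t<T. \<bar>majority_label y w t - y t\<bar>) = T/2 - (1/2) * (\<Sum>t<T. sg t * spin y t)"
    by (simp add: sum_subtractf sum_divide_distrib)
  also have "(\<Sum>t<T. sg t * spin y t) = (\<Sum>(j,i)\<in>{..<K}\<times>{..<d}. \<Sum>t\<in>cell w j i. sg t * spin y t)"
  proof -
    have "(\<Sum>t<T. sg t * spin y t) = (\<Sum>ji\<in>{..<K}\<times>{..<d}. \<Sum>t\<in>{t\<in>{..<T}. (epoch t, w t) = ji}. sg t * spin y t)"
      by (rule sum.group[symmetric]) (use epoch_less w in \<open>auto simp: PiE_iff\<close>)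
    also have "\<dots> = (\<Sum>(j,i)\<in>{..<K}\<times>{..<d}. \<Sum>t\<in>cell w j i. sg t * spin y t)"
      by (intro sum.cong refl) (auto simp: cell_def epoch_rounds_def intro!: sum.cong)
    finally show ?thesis .
  qed
  also have "\<dots> = (\<Sum>j<K. \<Sum>i<d. \<bar>spin_sum (cell w j i) y\<bar>)"
  proof -
    have "(\<Sum>t\<in>cell w j i. sg t * spin y t) = \<bar>spin_sum (cell w j i) y\<bar>" for j i
    proof -
      have "(\<Sum>t\<in>cell w j i. sg t * spin y t) = (if majority y w j i then 1 else -1) * spin_sum (cell w j i) y"
        unfolding spin_sum_def sum_distrib_left by (intro sum.cong refl) (auto simp: sg_def cell_def epoch_rounds_def)
      then show ?thesis
        by (auto simp: majority_def)
    qed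
    then show ?thesis
      by (simp add: sum.cartesian_product)
  qed
  finally show ?thesis .
qed

lemma sum_abs_spin_sum_cell_ge:
  assumes "j < K" "i < d"
  shows "card colorings * card labelings * ((5/9) * sqrt (L / d) - 4 / (27 * sqrt (L / d)))
    \<le> (\<Sum>w\<in>colorings. \<Sum>y\<in>labelings. \<bar>spin_sum (cell w j i) y\<bar>)"
proof -
  have "real L / d \<le> card (epoch_rounds j) / d"
    using card_epoch_rounds_ge[OF assms(1)] by (simp add: divide_right_mono)
  moreover have "epoch_rounds j \<subseteq> {..<T}"
    unfolding epoch_rounds_def by auto
  ultimately show ?thesis
    unfolding cell_def using L_pos d_pos assms(2) by (intro sum_abs_spin_sum_color_ge) simp_all
qed

lemma sum_regret_ge:
  assumes "\<And>t w y. P t w y \<in> {0..1}" and "\<And>t w y s. t < T \<Longrightarrow> P t w (y(t:=s)) = P t w y"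
  shows "card colorings * card labelings * epoch_regret_bound K L d
    \<le> (\<Sum>w\<in>colorings. \<Sum>y\<in>labelings. (\<Sum>t<T. \<bar>P t w y - y t\<bar>) - (\<Sum>t<T. \<bar>majority_label y w t - y t\<bar>))"
proof -
  let ?b = "(5/9) * sqrt (L / d) - 4 / (27 * sqrt (L / d))"
  have "(\<Sum>y\<in>labelings. (\<Sum>t<T. \<bar>P t w y - y t\<bar>) - (\<Sum>t<T. \<bar>majority_label y w t - y t\<bar>))
      = (1/2) * (\<Sum>j<K. \<Sum>i<d. \<Sum>y\<in>labelings. \<bar>spin_sum (cell w j i) y\<bar>)" if w: "w \<in> colorings" for w
  proof -
    have "(\<Sum>y\<in>labelings. \<Sum>t<T. \<bar>P t w y - y t\<bar>) = card labelings * T / 2"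
      using assms by (intro sum_abs_loss_of_unseen_label) auto
    moreover have "(\<Sum>y\<in>labelings. \<Sum>t<T. \<bar>majority_label y w t - y t\<bar>)
        = card labelings * T / 2 - (1/2) * (\<Sum>y\<in>labelings. \<Sum>j<K. \<Sum>i<d. \<bar>spin_sum (cell w j i) y\<bar>)"
      using comparator_loss_eq[OF _ w] by (simp add: sum_subtractf sum_distrib_left)
    moreover have "(\<Sum>y\<in>labelings. \<Sum>j<K. \<Sum>i<d. \<bar>spin_sum (cell w j i) y\<bar>)
        = (\<Sum>j<K. \<Sum>i<d. \<Sum>y\<in>labelings. \<bar>spin_sum (cell w j i) y\<bar>)"
      by (subst sum.swap) (simp add: sum.swap[of _ labelings])
    ultimately show ?thesis
      by (simp add: sum_subtractf)
  qed
  then have "(\<Sum>w\<in>colorings. \<Sum>y\<in>labelings. (\<Sum>t<T. \<bar>P t w y - y t\<bar>) - (\<Sum>t<T. \<bar>majority_label y w t - y t\<bar>))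
      = (1/2) * (\<Sum>j<K. \<Sum>i<d. \<Sum>w\<in>colorings. \<Sum>y\<in>labelings. \<bar>spin_sum (cell w j i) y\<bar>)"
    by (simp add: sum_divide_distrib sum.swap[of _ colorings])
  also have "\<dots> \<ge> (1/2) * (\<Sum>j<K. \<Sum>i<d. card colorings * card labelings * ?b)"
    by (intro mult_left_mono sum_mono sum_abs_spin_sum_cell_ge) auto
  finally show ?thesis
    by (simp add: epoch_regret_bound_def algebra_simps)
qed

text \<open>A learner only ever sees the instances \<open>g (position y w (w s) s) (w s)\<close>, \<open>s \<le> t\<close>, which do not
  depend on the label \<open>y t\<close>; averaging over all labelings leaves a fixed labeling \<open>ys\<close> on which the
  learner does badly against the majority labels.\<close>

lemma exists_labeling_with_large_regret:
  assumes "\<phi> \<in> learners"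
  shows "\<exists>ys\<in>labelings. card colorings * epoch_regret_bound K L d
    \<le> (\<Sum>w\<in>colorings. (\<Sum>t<T. \<bar>\<phi> t (restrict (\<lambda>s. g (position ys w (w s) s) (w s)) {..t}) (restrict ys {..<t}) - ys t\<bar>)
         - (\<Sum>t<T. \<bar>majority_label ys w t - ys t\<bar>))"
proof -
  define P where "P t w y = \<phi> t (restrict (\<lambda>s. g (position y w (w s) s) (w s)) {..t}) (restrict y {..<t})"
    for t w y
  have "P t w y \<in> {0..1}" for t w y
    using assms unfolding learners_def P_def by auto
  moreover have "P t w (y(t:=v)) = P t w y" if "t < T" for t w y v
  proof -
    have "position (y(t:=v)) w (w s) s = position y w (w s) s" if "s \<le> t" for s
      using that by (intro position_cong) auto
    then have "restrict (\<lambda>s. g (position (y(t:=v)) w (w s) s) (w s)) {..t}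
        = restrict (\<lambda>s. g (position y w (w s) s) (w s)) {..t}"
      by (intro restrict_ext) auto
    moreover have "restrict (y(t:=v)) {..<t} = restrict y {..<t}"
      by (intro restrict_ext) auto
    ultimately show ?thesis
      unfolding P_def by simp
  qed
  ultimately have "card labelings * (card colorings * epoch_regret_bound K L d)
      \<le> (\<Sum>y\<in>labelings. \<Sum>w\<in>colorings. (\<Sum>t<T. \<bar>P t w y - y t\<bar>) - (\<Sum>t<T. \<bar>majority_label y w t - y t\<bar>))"
    using sum_regret_ge[of P] by (subst sum.swap) (simp add: mult.commute mult.left_commute)
  then show ?thesis
    unfolding P_def by (intro exists_ge_average) (auto simp: finite_PiE PiE_eq_empty_iff)
qed

end

lemma worst_regret_ge_regret_of:
  assumes "h \<in> H" "y \<in> PiE {..<T} (\<lambda>_. {0,1})"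
  shows "ennreal ((\<Sum>t<T. \<bar>\<phi> t (restrict x {..t}) (restrict y {..<t}) - y t\<bar>) - (\<Sum>t<T. \<bar>h (x t) - y t\<bar>))
    \<le> e2ennreal (worst_regret H T \<phi> x)"
proof -
  have "(INF h\<in>H. ereal (\<Sum>t<T. \<bar>h (x t) - y t\<bar>)) \<le> ereal (\<Sum>t<T. \<bar>h (x t) - y t\<bar>)"
    using assms(1) by (rule INF_lower)
  then have "ereal (\<Sum>t<T. \<bar>\<phi> t (restrict x {..t}) (restrict y {..<t}) - y t\<bar>) - ereal (\<Sum>t<T. \<bar>h (x t) - y t\<bar>)
      \<le> abs_regret H T \<phi> x y"
    unfolding abs_regret_def using ereal_minus_mono[OF order_refl] by blast
  also have "\<dots> \<le> worst_regret H T \<phi> x"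
    unfolding worst_regret_def using assms(2) by (rule SUP_upper)
  finally show ?thesis
    using e2ennreal_mono by fastforce
qed

lemma nn_integral_return_ge:
  assumes "a \<in> space N" "{a} \<in> sets N"
  shows "f a \<le> (\<integral>\<^sup>+x. f x \<partial>return N a)"
proof -
  have "(\<integral>\<^sup>+x. f a * indicator {a} x \<partial>return N a) = f a"
    using assms by (subst nn_integral_cmult_indicator) auto
  moreover have "(\<integral>\<^sup>+x. f a * indicator {a} x \<partial>return N a) \<le> (\<integral>\<^sup>+x. f x \<partial>return N a)"
    by (intro nn_integral_mono) (auto simp: indicator_def)
  ultimately show ?thesis
    by simp
qed

text \<open>The conditional laws of a deterministic sequence are the Dirac measures at its values.\<close>

lemma return_in_U_K1:
  assumes xs: "xs \<in> space (seq_space M T)" and card: "card (xs ` {..<T}) \<le> K"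
  shows "return (seq_space M T) xs \<in> U_K1 M T K"
proof -
  let ?N = "seq_space M T"
  define \<kappa> where "\<kappa> t h = return M (xs t)" for t :: nat and h :: "nat \<Rightarrow> 'a"
  have "conditional_laws M T (return ?N xs) \<kappa>"
    unfolding conditional_laws_def
  proof (intro allI impI conjI ballI)
    fix t assume t: "t < T"
    then have "xs t \<in> space M"
      using xs unfolding seq_space_def space_PiM by (auto simp: PiE_iff)
    then show "\<kappa> t \<in> seq_space M t \<rightarrow>\<^sub>M prob_algebra M"
      unfolding \<kappa>_def by (intro measurable_const) (simp add: space_prob_algebra prob_space_return)
    fix A B assume A: "A \<in> sets (seq_space M t)" and B: "B \<in> sets M"
    have past: "(\<lambda>x. restrict x {..<t}) \<in> ?N \<rightarrow>\<^sub>M seq_space M t"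
      unfolding seq_space_def by (rule measurable_restrict_subset) (use t in auto)
    have now: "(\<lambda>x. x t) \<in> ?N \<rightarrow>\<^sub>M M"
      unfolding seq_space_def using t by (intro measurable_component_singleton) auto
    have "{x\<in>space (return ?N xs). restrict x {..<t} \<in> A \<and> x t \<in> B}
        = ((\<lambda>x. restrict x {..<t}) -` A \<inter> space ?N) \<inter> ((\<lambda>x. x t) -` B \<inter> space ?N)"
      by auto
    then have "{x\<in>space (return ?N xs). restrict x {..<t} \<in> A \<and> x t \<in> B} \<in> sets ?N"
      using measurable_sets[OF past A] measurable_sets[OF now B] by auto
    moreover have "(\<lambda>x. indicator A (restrict x {..<t}) :: ennreal) \<in> borel_measurable ?N"
      using measurable_compose[OF past borel_measurable_indicator[OF A]] by simp
    then have "(\<lambda>x. indicator A (restrict x {..<t}) * emeasure (\<kappa> t (restrict x {..<t})) B :: ennreal)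
        \<in> borel_measurable ?N"
      unfolding \<kappa>_def by simp
    ultimately show "emeasure (return ?N xs) {x\<in>space (return ?N xs). restrict x {..<t} \<in> A \<and> x t \<in> B}
        = (\<integral>\<^sup>+ x. indicator A (restrict x {..<t}) * emeasure (\<kappa> t (restrict x {..<t})) B \<partial>return ?N xs)"
      using xs B by (simp add: nn_integral_return \<kappa>_def indicator_def)
  qed
  moreover have "card ((\<lambda>t. \<kappa> t (restrict x {..<t})) ` {..<T}) \<le> K" for x
  proof -
    have "(\<lambda>t. \<kappa> t (restrict x {..<t})) ` {..<T} = return M ` (xs ` {..<T})"
      unfolding \<kappa>_def by auto
    then show ?thesis
      using card_image_le[of "xs ` {..<T}" "return M"] card by auto
  qed
  ultimately show ?thesis
    unfolding U_K1_def using prob_space_return[OF xs] by auto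
qed

lemma sets_seq_space_count_space:
  assumes "A \<subseteq> space (seq_space (count_space (UNIV::nat set)) n)"
  shows "A \<in> sets (seq_space (count_space (UNIV::nat set)) n)"
proof -
  let ?N = "seq_space (count_space (UNIV::nat set)) n"
  have space: "space ?N = PiE {..<n} (\<lambda>_. UNIV)"
    unfolding seq_space_def space_PiM by simp
  have "countable (PiE {..<n} (\<lambda>_. UNIV :: nat set))"
    by (intro countable_PiE) auto
  then have "countable A"
    using assms countable_subset unfolding space by blast
  moreover have "{a} \<in> sets ?N" if "a \<in> A" for a
  proof -
    have "a \<in> PiE {..<n} (\<lambda>_. UNIV)"
      using that assms space by auto
    then have "{a} = PiE {..<n} (\<lambda>i. {a i})"
      by (intro PiE_singleton[symmetric]) (simp add: PiE_iff)
    also have "\<dots> \<in> sets ?N"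
      unfolding seq_space_def by (intro sets_PiM_I_finite) auto
    finally show ?thesis .
  qed
  ultimately show ?thesis
    by (rule sets.countable[rotated])
qed

lemma measurable_seq_space_count_space:
  "f \<in> space (seq_space (count_space (UNIV::nat set)) n) \<rightarrow> space N
    \<Longrightarrow> f \<in> seq_space (count_space (UNIV::nat set)) n \<rightarrow>\<^sub>M N"
  by (intro measurableI) (auto intro: sets_seq_space_count_space)

lemma nn_integral_distr_pmf_of_set:
  assumes "finite W" "W \<noteq> {}" "\<And>w. G w \<in> space N" "F \<in> borel_measurable N"
  shows "(\<integral>\<^sup>+x. F x \<partial>distr (measure_pmf (pmf_of_set W)) N G) = (\<Sum>w\<in>W. F (G w)) / card W"
proof -
  have "G \<in> measure_pmf (pmf_of_set W) \<rightarrow>\<^sub>M N"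
    using assms(3) by simp
  then show ?thesis
    using assms by (simp add: nn_integral_distr nn_integral_pmf_of_set)
qed

lemma minimax_regret_ge:
  fixes M :: "'a measure"
  assumes "\<And>\<phi>. \<phi> \<in> learners \<Longrightarrow> \<exists>\<nu>\<in>U_K1 M T K. B \<le> (\<integral>\<^sup>+x. e2ennreal (worst_regret H T \<phi> x) \<partial>\<nu>)"
  shows "B \<le> minimax_regret M H T K"
  unfolding minimax_regret_def
proof (rule INF_greatest)
  fix \<phi> :: "nat \<Rightarrow> (nat \<Rightarrow> 'a) \<Rightarrow> (nat \<Rightarrow> real) \<Rightarrow> real"
  assume "\<phi> \<in> learners"
  then obtain \<nu> where "\<nu> \<in> U_K1 M T K" "B \<le> (\<integral>\<^sup>+x. e2ennreal (worst_regret H T \<phi> x) \<partial>\<nu>)"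
    using assms by blast
  then show "B \<le> (SUP \<nu>\<in>U_K1 M T K. \<integral>\<^sup>+x. e2ennreal (worst_regret H T \<phi> x) \<partial>\<nu>)"
    by (rule SUP_upper2)
qed

context epoch_construction
begin

definition scaled_queries :: "(nat \<Rightarrow> bool) \<Rightarrow> nat \<Rightarrow> real" where
  "scaled_queries m = restrict (\<lambda>s. real (dyadic_query K m (epoch s)) / 2^K) {..<T}"

lemma scaled_queries_in_space:
  "scaled_queries m \<in> space (seq_space (restrict_space borel {0..1}) T)"
proof -
  have "scaled_queries m t \<in> {0..1}" if "t < T" for t
    using dyadic_query_less[OF epoch_less, of m t] unfolding scaled_queries_def
    by (simp add: that divide_le_eq_1 less_imp_le of_nat_less_iff[symmetric])
  then show ?thesis
    unfolding seq_space_def space_PiM by (auto simp: space_restrict_space scaled_queries_def)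
qed

lemma return_scaled_queries_in_U_K1:
  "return (seq_space (restrict_space borel {0..1}) T) (scaled_queries m) \<in> U_K1 (restrict_space borel {0..1}) T K"
proof (rule return_in_U_K1[OF scaled_queries_in_space])
  have "scaled_queries m ` {..<T} \<subseteq> (\<lambda>j. real (dyadic_query K m j) / 2^K) ` {..<K}"
    unfolding scaled_queries_def using epoch_less by auto
  then show "card (scaled_queries m ` {..<T}) \<le> K"
    by (rule card_le_if_subset_image_lessThan)
qed

lemma nn_integral_return_scaled_queries_ge:
  "f (scaled_queries m) \<le> (\<integral>\<^sup>+x. f x \<partial>return (seq_space (restrict_space borel {0..1}) T) (scaled_queries m))"
proof (rule nn_integral_return_ge[OF scaled_queries_in_space])
  have "{scaled_queries m} = PiE {..<T} (\<lambda>t. {scaled_queries m t})"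
    unfolding scaled_queries_def by (rule PiE_singleton[symmetric]) simp
  also have "\<dots> \<in> sets (seq_space (restrict_space borel {0..1}) T)"
    using scaled_queries_in_space unfolding seq_space_def
    by (intro sets_PiM_I_finite) (auto simp: sets_restrict_space_iff space_PiM space_restrict_space PiE_iff)
  finally show "{scaled_queries m} \<in> sets (seq_space (restrict_space borel {0..1}) T)" .
qed

end

lemma threshold_process_regret_ge:
  assumes "1 \<le> K" "1 \<le> L" "K * L \<le> T" "\<phi> \<in> learners"
  shows "\<exists>\<nu>\<in>U_K1 (restrict_space borel {0..1::real}) T K.
    ennreal (epoch_regret_bound K L 1) \<le> (\<integral>\<^sup>+x. e2ennreal (worst_regret threshold_class T \<phi> x) \<partial>\<nu>)"
proof -
  interpret epoch_construction K L T 1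
    using assms by unfold_locales auto
  define w0 where "w0 = restrict (\<lambda>_. 0::nat) {..<T}"
  have "colorings = PiE {..<T} (\<lambda>t. {w0 t})"
    by (intro PiE_cong) (auto simp: w0_def)
  also have "\<dots> = {w0}"
    unfolding w0_def by (rule PiE_singleton) (rule restrict_extensional)
  finally obtain ys where ys: "ys \<in> labelings" and regret: "epoch_regret_bound K L 1
    \<le> (\<Sum>t<T. \<bar>\<phi> t (restrict (\<lambda>s. real (position ys w0 (w0 s) s) / 2^K) {..t}) (restrict ys {..<t}) - ys t\<bar>)
      - (\<Sum>t<T. \<bar>majority_label ys w0 t - ys t\<bar>)"
    using exists_labeling_with_large_regret[OF assms(4), of "\<lambda>p _. real p / 2^K"] by auto
  define m where "m j = majority ys w0 j 0" for j
  define xs where "xs = scaled_queries m"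
  define a where "a = real (dyadic_threshold K m) / 2^K"
  have position_w0: "position ys w0 (w0 s) s = dyadic_query K m (epoch s)" if "s < T" for s
    using that unfolding position_def m_def w0_def by simp
  have a_in: "(\<lambda>x. if a \<le> x then 1 else 0) \<in> threshold_class"
    using dyadic_threshold_le[of K m] unfolding threshold_class_def a_def
    by (auto simp: of_nat_le_iff[symmetric])
  have "(if a \<le> xs t then 1 else 0) = majority_label ys w0 t" if "t < T" for t
    using that majority_label_eq_threshold[of ys w0 t] position_w0[OF that]
    unfolding a_def xs_def scaled_queries_def m_def by (simp add: w0_def field_simps)
  moreover have "restrict xs {..t} = restrict (\<lambda>s. real (position ys w0 (w0 s) s) / 2^K) {..t}" if "t < T" for t
    using that position_w0 by (intro restrict_ext) (auto simp: xs_def scaled_queries_def)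
  ultimately have "(\<Sum>t<T. \<bar>\<phi> t (restrict xs {..t}) (restrict ys {..<t}) - ys t\<bar>)
      - (\<Sum>t<T. \<bar>(if a \<le> xs t then 1 else 0) - ys t\<bar>)
    = (\<Sum>t<T. \<bar>\<phi> t (restrict (\<lambda>s. real (position ys w0 (w0 s) s) / 2^K) {..t}) (restrict ys {..<t}) - ys t\<bar>)
      - (\<Sum>t<T. \<bar>majority_label ys w0 t - ys t\<bar>)"
    by (intro arg_cong2[where f = minus] sum.cong) simp_all
  then have "ennreal (epoch_regret_bound K L 1) \<le> ennreal ((\<Sum>t<T. \<bar>\<phi> t (restrict xs {..t}) (restrict ys {..<t}) - ys t\<bar>)
      - (\<Sum>t<T. \<bar>(if a \<le> xs t then 1 else 0) - ys t\<bar>))"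
    using regret by (intro ennreal_leI) simp
  also have "\<dots> \<le> e2ennreal (worst_regret threshold_class T \<phi> xs)"
    by (rule worst_regret_ge_regret_of[OF a_in ys])
  also have "\<dots> \<le> (\<integral>\<^sup>+x. e2ennreal (worst_regret threshold_class T \<phi> x) \<partial>return (seq_space (restrict_space borel {0..1}) T) xs)"
    unfolding xs_def by (rule nn_integral_return_scaled_queries_ge)
  finally show ?thesis
    using return_scaled_queries_in_U_K1 unfolding xs_def by blast
qed

definition color_threshold_class :: "nat \<Rightarrow> (nat \<Rightarrow> real) set" where
  "color_threshold_class d = {(\<lambda>n. if \<theta> (n mod d) \<le> n div d then 1 else 0) | \<theta> :: nat \<Rightarrow> nat. True}"

lemma binary_color_threshold_class: "binary_class UNIV (color_threshold_class d)"
  unfolding binary_class_def color_threshold_class_def by auto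

text \<open>Two shattered points cannot share a color: the one with the larger position would be labelled 1
  whenever the other one is.\<close>

lemma VC_le_color_threshold_class:
  assumes "1 \<le> d"
  shows "VC_le UNIV (color_threshold_class d) d"
  unfolding VC_le_def
proof (intro allI impI)
  fix S :: "nat set"
  assume "S \<subseteq> UNIV \<and> finite S \<and> shatters (color_threshold_class d) S"
  then have shatters: "shatters (color_threshold_class d) S"
    by simp
  have "x div d \<ge> z div d" if "x \<in> S" "z \<in> S" "x mod d = z mod d" "x \<noteq> z" for x z
  proof (rule ccontr)
    assume less: "\<not> x div d \<ge> z div d"
    obtain h where h: "h \<in> color_threshold_class d" and "\<forall>u\<in>S. h u = 1 \<longleftrightarrow> u \<in> {x}"
      using shatters \<open>x \<in> S\<close> unfolding shatters_def by (meson empty_subsetI insert_subset)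
    then have "h x = 1" "h z \<noteq> 1"
      using that by auto
    moreover obtain \<theta> where "h = (\<lambda>n. if \<theta> (n mod d) \<le> n div d then 1 else 0)"
      using h unfolding color_threshold_class_def by blast
    ultimately show False
      using less \<open>x mod d = z mod d\<close> by (auto split: if_splits)
  qed
  then have "inj_on (\<lambda>n. n mod d) S"
    by (intro inj_onI) (metis div_mult_mod_eq le_antisym)
  moreover have "(\<lambda>n. n mod d) ` S \<subseteq> {..<d}"
    using assms by auto
  ultimately show "card S \<le> d"
    by (metis card_image card_lessThan card_mono finite_lessThan)
qed

context epoch_construction
begin

text \<open>Instance \<open>p * d + i\<close> encodes the point at position \<open>p\<close> of color \<open>i\<close>.\<close>

definition colored_instance :: "(nat \<Rightarrow> real) \<Rightarrow> (nat \<Rightarrow> nat) \<Rightarrow> nat \<Rightarrow> nat" where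
  "colored_instance y w s = position y w (w s) s * d + w s"

definition colored_process :: "(nat \<Rightarrow> real) \<Rightarrow> (nat \<Rightarrow> nat) measure" where
  "colored_process y = distr (measure_pmf (pmf_of_set colorings)) (seq_space (count_space UNIV) T)
     (\<lambda>w. restrict (colored_instance y w) {..<T})"

text \<open>Given past instances \<open>h\<close>, whose colors are \<open>h s mod d\<close>, the instance of round \<open>t\<close> is uniform on
  these \<open>d\<close> points, one per color.\<close>

definition next_instances :: "(nat \<Rightarrow> real) \<Rightarrow> nat \<Rightarrow> (nat \<Rightarrow> nat) \<Rightarrow> nat set" where
  "next_instances y t h = (\<lambda>i. position y (\<lambda>s. h s mod d) i t * d + i) ` {..<d}"

lemma colorings_finite: "finite colorings"
  by (simp add: finite_PiE)

lemma colorings_nonempty: "colorings \<noteq> {}"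
  using d_pos by (simp add: PiE_eq_empty_iff lessThan_empty_iff)

lemma next_instances_colored_instance:
  assumes "w \<in> colorings" "t \<le> T"
  shows "next_instances y t (restrict (colored_instance y w) {..<t}) = (\<lambda>i. position y w i t * d + i) ` {..<d}"
proof -
  have "position y (\<lambda>s. restrict (colored_instance y w) {..<t} s mod d) i t = position y w i t" for i
  proof (rule position_cong)
    fix s assume "s < t"
    then have "w s < d"
      using assms by (auto simp: PiE_iff)
    with \<open>s < t\<close> show "restrict (colored_instance y w) {..<t} s mod d = w s"
      by (simp add: colored_instance_def)
  qed simp
  then show ?thesis
    unfolding next_instances_def by simp
qed

lemma card_next_instances_inter:
  "card ((\<lambda>i. p i * d + i) ` {..<d} \<inter> B) = card {i\<in>{..<d}. p i * d + i \<in> B}"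
proof -
  have "inj_on (\<lambda>i. p i * d + i) {..<d}"
    by (rule inj_onI) (metis lessThan_iff mod_less mod_mult_self3)
  moreover have "(\<lambda>i. p i * d + i) ` {..<d} \<inter> B = (\<lambda>i. p i * d + i) ` {i\<in>{..<d}. p i * d + i \<in> B}"
    by auto
  ultimately show ?thesis
    by (metis (no_types, lifting) card_image inj_on_subset mem_Collect_eq subsetI)
qed

lemma emeasure_next_instances:
  assumes "w \<in> colorings" "t \<le> T"
  shows "emeasure (measure_pmf (pmf_of_set (next_instances y t (restrict (colored_instance y w) {..<t})))) B
    = ennreal (card {i\<in>{..<d}. position y w i t * d + i \<in> B} / d)"
proof -
  let ?V = "(\<lambda>i. position y w i t * d + i) ` {..<d}"
  have "card ?V = d"
    using card_next_instances_inter[of "\<lambda>i. position y w i t" UNIV] by simp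
  moreover have "?V \<noteq> {}"
    using d_pos by (simp add: lessThan_empty_iff)
  ultimately show ?thesis
    using d_pos card_next_instances_inter[of "\<lambda>i. position y w i t" B] next_instances_colored_instance[OF assms]
    by (simp add: emeasure_pmf_of_set divide_ennreal ennreal_of_nat_eq_real_of_nat)
qed

text \<open>Resampling the color of round \<open>t\<close> leaves the past unchanged and moves the instance of round \<open>t\<close>
  through all \<open>d\<close> candidate points.\<close>

lemma sum_colorings_next_instance:
  assumes "t < T"
  shows "(\<Sum>w\<in>colorings. indicator A (restrict (colored_instance y w) {..<t}) * indicator B (colored_instance y w t))
    = (\<Sum>w\<in>colorings. indicator A (restrict (colored_instance y w) {..<t})
        * (card {i\<in>{..<d}. position y w i t * d + i \<in> B} / d) :: real)"
proof -
  have past: "restrict (colored_instance y (w(t:=i))) {..<t} = restrict (colored_instance y w) {..<t}" for w i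
  proof -
    have "position y (w(t:=i)) (w s) s = position y w (w s) s" if "s < t" for s
      using that by (intro position_cong) auto
    then show ?thesis
      unfolding colored_instance_def by (intro restrict_ext) auto
  qed
  have now: "colored_instance y (w(t:=i)) t = position y w i t * d + i" for w i
    using position_cong[of t y y "w(t:=i)" w i] unfolding colored_instance_def by simp
  have "(\<Sum>w\<in>colorings. indicator A (restrict (colored_instance y w) {..<t}) * indicator B (colored_instance y w t))
    = (\<Sum>w\<in>colorings. \<Sum>i<d. indicator A (restrict (colored_instance y (w(t:=i))) {..<t})
        * indicator B (colored_instance y (w(t:=i)) t)) / card {..<d}"
    by (rule sum_PiE_fun_upd_average) (use assms d_pos in \<open>auto simp: lessThan_empty_iff\<close>)
  also have "\<dots> = (\<Sum>w\<in>colorings. indicator A (restrict (colored_instance y w) {..<t})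
        * (card {i\<in>{..<d}. position y w i t * d + i \<in> B} / d))"
  proof -
    have "(\<Sum>i<d. indicator B (position y w i t * d + i)) = real (card {i\<in>{..<d}. position y w i t * d + i \<in> B})" for w
      by (simp add: indicator_def Int_def flip: sum.If_cases)
    then show ?thesis
      unfolding past now by (simp add: sum_distrib_left[symmetric] sum_divide_distrib)
  qed
  finally show ?thesis .
qed

lemma colored_process_conditional_law:
  assumes t: "t < T"
  shows "emeasure (colored_process y) {x\<in>space (colored_process y). restrict x {..<t} \<in> A \<and> x t \<in> B}
    = (\<integral>\<^sup>+x. indicator A (restrict x {..<t}) * emeasure (measure_pmf (pmf_of_set (next_instances y t (restrict x {..<t})))) B
        \<partial>colored_process y)"
proof -
  let ?N = "seq_space (count_space (UNIV::nat set)) T"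
  define G where "G w = restrict (colored_instance y w) {..<T}" for w
  define S where "S = {x\<in>space ?N. restrict x {..<t} \<in> A \<and> x t \<in> B}"
  define F where "F x = indicator A (restrict x {..<t}) * emeasure (measure_pmf (pmf_of_set (next_instances y t (restrict x {..<t})))) B" for x
  have G_space: "G w \<in> space ?N" for w
    unfolding G_def seq_space_def space_PiM by simp
  have past: "restrict (G w) {..<t} = restrict (colored_instance y w) {..<t}" for w
    using t unfolding G_def by (intro restrict_ext) auto
  have "S \<in> sets ?N"
    unfolding S_def by (rule sets_seq_space_count_space) auto
  then have "emeasure (colored_process y) S = (\<Sum>w\<in>colorings. ennreal (indicator S (G w))) / card colorings"
    unfolding colored_process_def G_def[symmetric]
    using nn_integral_distr_pmf_of_set[OF colorings_finite colorings_nonempty G_space, of "indicator S"]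
    by (simp add: nn_integral_indicator[symmetric] ennreal_indicator del: nn_integral_indicator)
  also have "\<dots> = (\<Sum>w\<in>colorings. F (G w)) / card colorings"
  proof -
    have "indicator S (G w) = indicator A (restrict (colored_instance y w) {..<t}) * (indicator B (colored_instance y w t) :: real)" for w
      using G_space t past by (simp add: S_def G_def indicator_def)
    moreover have "F (G w) = ennreal (indicator A (restrict (colored_instance y w) {..<t})
        * (card {i\<in>{..<d}. position y w i t * d + i \<in> B} / d))" if "w \<in> colorings" for w
      using emeasure_next_instances[OF that, of t y B] t past by (simp add: F_def indicator_def)
    ultimately show ?thesis
      using sum_colorings_next_instance[OF t, of A y B] by (simp add: sum_ennreal)
  qed
  also have "\<dots> = (\<integral>\<^sup>+x. F x \<partial>colored_process y)"
    unfolding colored_process_def G_def[symmetric]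
    by (rule nn_integral_distr_pmf_of_set[symmetric, OF colorings_finite colorings_nonempty G_space])
      (rule measurable_seq_space_count_space, simp)
  finally show ?thesis
    unfolding S_def F_def colored_process_def by simp
qed

text \<open>Given the past, the law of the next instance depends on the round only through its epoch, so
  there are at most \<open>K\<close> distinct conditional laws.\<close>

lemma colored_process_in_U_K1: "colored_process y \<in> U_K1 (count_space UNIV) T K"
proof -
  let ?N = "seq_space (count_space (UNIV::nat set)) T"
  define \<kappa> where "\<kappa> t h = measure_pmf (pmf_of_set (next_instances y t h))" for t h
  have "conditional_laws (count_space UNIV) T (colored_process y) \<kappa>"
    unfolding conditional_laws_def \<kappa>_def
  proof (intro allI impI conjI ballI)
    fix t
    show "(\<lambda>h. measure_pmf (pmf_of_set (next_instances y t h))) \<in> seq_space (count_space UNIV) t \<rightarrow>\<^sub>M prob_algebra (count_space UNIV)"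
      by (rule measurable_seq_space_count_space) (simp add: space_prob_algebra prob_space_measure_pmf)
  qed (rule colored_process_conditional_law)
  moreover have "card ((\<lambda>t. \<kappa> t (restrict x {..<t})) ` {..<T}) \<le> K" for x
  proof -
    define Q where "Q j = measure_pmf (pmf_of_set
      ((\<lambda>i. dyadic_query K (\<lambda>j'. majority y (\<lambda>s. x s mod d) j' i) j * d + i) ` {..<d}))" for j
    have "position y (\<lambda>s. restrict x {..<t} s mod d) i t = position y (\<lambda>s. x s mod d) i t" for t i
      by (rule position_cong) simp_all
    then have "\<kappa> t (restrict x {..<t}) = Q (epoch t)" for t
      unfolding \<kappa>_def Q_def next_instances_def by (simp add: position_def)
    then have "(\<lambda>t. \<kappa> t (restrict x {..<t})) ` {..<T} \<subseteq> Q ` {..<K}"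
      using epoch_less by auto
    then show ?thesis
      by (rule card_le_if_subset_image_lessThan)
  qed
  moreover have "prob_space (colored_process y)"
    unfolding colored_process_def by (rule measure_pmf.prob_space_distr) (simp add: seq_space_def space_PiM)
  ultimately show ?thesis
    unfolding U_K1_def colored_process_def by auto
qed

lemma worst_regret_colored_instance_ge:
  assumes w: "w \<in> colorings" and y: "y \<in> labelings"
  shows "ennreal ((\<Sum>t<T. \<bar>\<phi> t (restrict (colored_instance y w) {..t}) (restrict y {..<t}) - y t\<bar>)
      - (\<Sum>t<T. \<bar>majority_label y w t - y t\<bar>))
    \<le> e2ennreal (worst_regret (color_threshold_class d) T \<phi> (restrict (colored_instance y w) {..<T}))"
proof -
  define G where "G = restrict (colored_instance y w) {..<T}"
  define \<theta> where "\<theta> i = dyadic_threshold K (\<lambda>j. majority y w j i)" for i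
  have h: "(\<lambda>n. if \<theta> (n mod d) \<le> n div d then 1 else 0) \<in> color_threshold_class d"
    unfolding color_threshold_class_def by blast
  have "colored_instance y w t mod d = w t" "colored_instance y w t div d = position y w (w t) t"
    if "t < T" for t
  proof -
    have "w t < d"
      using w that by (auto simp: PiE_iff)
    then show "colored_instance y w t mod d = w t" "colored_instance y w t div d = position y w (w t) t"
      by (simp_all add: colored_instance_def)
  qed
  then have "(if \<theta> (G t mod d) \<le> G t div d then 1 else 0) = majority_label y w t" if "t < T" for t
    using that majority_label_eq_threshold[of y w t] unfolding G_def \<theta>_def by simp
  moreover have "restrict G {..t} = restrict (colored_instance y w) {..t}" if "t < T" for t
    using that unfolding G_def by (intro restrict_ext) auto
  ultimately show ?thesis
    using worst_regret_ge_regret_of[OF h y, of \<phi> G] by (simp add: G_def)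
qed

lemma colored_process_regret_ge:
  assumes "\<phi> \<in> learners"
  shows "\<exists>ys. ennreal (epoch_regret_bound K L d)
    \<le> (\<integral>\<^sup>+x. e2ennreal (worst_regret (color_threshold_class d) T \<phi> x) \<partial>colored_process ys)"
proof -
  obtain ys where ys: "ys \<in> labelings" and regret: "card colorings * epoch_regret_bound K L d
    \<le> (\<Sum>w\<in>colorings. (\<Sum>t<T. \<bar>\<phi> t (restrict (colored_instance ys w) {..t}) (restrict ys {..<t}) - ys t\<bar>)
         - (\<Sum>t<T. \<bar>majority_label ys w t - ys t\<bar>))"
    using exists_labeling_with_large_regret[OF assms, of "\<lambda>p i. p * d + i"]
    unfolding colored_instance_def[abs_def] by auto
  define G where "G w = restrict (colored_instance ys w) {..<T}" for w
  have "ennreal (epoch_regret_bound K L d)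
      \<le> (\<Sum>w\<in>colorings. e2ennreal (worst_regret (color_threshold_class d) T \<phi> (G w))) / card colorings"
    using regret unfolding G_def
    by (rule ennreal_le_average[OF colorings_finite colorings_nonempty _ worst_regret_colored_instance_ge[OF _ ys]])
  also have "\<dots> = (\<integral>\<^sup>+x. e2ennreal (worst_regret (color_threshold_class d) T \<phi> x) \<partial>colored_process ys)"
  proof -
    have "G w \<in> space (seq_space (count_space UNIV) T)" for w
      unfolding G_def seq_space_def space_PiM by simp
    moreover have "(\<lambda>x. e2ennreal (worst_regret (color_threshold_class d) T \<phi> x))
        \<in> borel_measurable (seq_space (count_space UNIV) T)"
      by (rule measurable_seq_space_count_space) simp
    ultimately show ?thesis
      unfolding colored_process_def G_def[symmetric]
      by (intro nn_integral_distr_pmf_of_set[symmetric] colorings_finite colorings_nonempty)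
  qed
  finally show ?thesis
    by blast
qed

end

lemma epoch_length_bounds:
  fixes K T :: nat
  assumes "1 \<le> K" "K \<le> T"
  shows "1 \<le> T div K" "K * (T div K) \<le> T" "T \<le> 2 * K * (T div K)"
proof -
  show "1 \<le> T div K"
    using assms by (simp add: Suc_le_eq div_greater_zero_iff)
  show "K * (T div K) \<le> T"
    by (simp add: mult.commute)
  have "T = K * (T div K) + T mod K" "T mod K < K"
    using assms(1) by simp_all
  moreover have "K \<le> K * (T div K)"
    using \<open>1 \<le> T div K\<close> by simp
  ultimately show "T \<le> 2 * K * (T div K)"
    by linarith
qed

lemma sqrt_le_epoch_regret_bound:
  fixes K L T d :: nat
  assumes "1 \<le> d" "d \<le> L" "T \<le> 2 * K * L"
  shows "sqrt (real K * real d * real T / 64) \<le> epoch_regret_bound K L d"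
proof -
  define s where "s = sqrt (L / d)"
  have s: "1 \<le> s"
    using assms unfolding s_def by simp
  define Y where "Y = real K * real d * (real K * real L)"
  have "real T \<le> 2 * real K * real L"
    using assms(3) by (simp add: of_nat_le_iff[symmetric, where 'a=real])
  then have "real K * real d * real T \<le> real K * real d * (2 * real K * real L)"
    by (intro mult_left_mono) simp_all
  then have "real K * real d * real T \<le> 2 * Y"
    by (simp add: Y_def algebra_simps)
  moreover have "((11/54) * (real K * real d * s))^2 = (121/2916) * Y"
    using assms(1) by (simp add: Y_def s_def power_mult_distrib field_simps power2_eq_square)
  moreover have "0 \<le> Y"
    by (simp add: Y_def)
  ultimately have "real K * real d * real T / 64 \<le> ((11/54) * (real K * real d * s))^2"
    by linarith
  then have "sqrt (real K * real d * real T / 64) \<le> (11/54) * (real K * real d * s)"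
    using s by (intro real_le_lsqrt) simp_all
  also have "\<dots> \<le> real K * real d * ((5/18) * s - 2 / (27 * s))"
  proof -
    have "2 / (27 * s) \<le> 2 / 27"
      using s by (intro divide_left_mono) auto
    also have "\<dots> \<le> (2/27) * s"
      using s by simp
    finally have "(11/54) * s \<le> (5/18) * s - 2 / (27 * s)"
      by simp
    then have "real K * real d * ((11/54) * s) \<le> real K * real d * ((5/18) * s - 2 / (27 * s))"
      by (intro mult_left_mono) simp_all
    then show ?thesis
      by (simp add: algebra_simps)
  qed
  finally show ?thesis
    unfolding epoch_regret_bound_def s_def .
qed

lemma mult_le_of_log_bound:
  assumes "1 \<le> d" "1 \<le> K" "8 * real K * real d * ln (2 * real K * real d) \<le> real T"
  shows "K * d \<le> T"
proof -
  have "1 \<le> K * d"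
    using assms(1,2) by (simp add: Suc_le_eq)
  then have Kd: "1 \<le> real K * real d"
    by (simp flip: of_nat_mult)
  then have "ln 2 \<le> ln (2 * real K * real d)"
    by (simp add: mult.assoc)
  then have "1 \<le> 8 * ln (2 * real K * real d)"
    using ln2_ge_two_thirds by linarith
  then have "real K * real d * 1 \<le> real K * real d * (8 * ln (2 * real K * real d))"
    using Kd by (intro mult_left_mono) simp_all
  with assms(3) have "real (K * d) \<le> real T"
    by (simp add: mult.assoc mult.left_commute)
  then show ?thesis
    by (simp only: of_nat_le_iff)
qed

lemma minimax_regret_color_threshold_class_ge:
  assumes "1 \<le> d" "1 \<le> K" "K * d \<le> T"
  shows "ennreal (sqrt (real K * real d * real T / 64)) \<le> minimax_regret (count_space UNIV) (color_threshold_class d) T K"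
proof (rule minimax_regret_ge)
  define L where "L = T div K"
  have "K \<le> K * d"
    using assms(1) by simp
  then have "K \<le> T"
    using assms(3) by (rule order_trans)
  note L = epoch_length_bounds[OF assms(2) this, folded L_def]
  interpret epoch_construction K L T d
    using assms L by unfold_locales auto
  have "d \<le> L"
    using assms unfolding L_def by (simp add: less_eq_div_iff_mult_less_eq mult.commute)
  fix \<phi> :: "nat \<Rightarrow> (nat \<Rightarrow> nat) \<Rightarrow> (nat \<Rightarrow> real) \<Rightarrow> real"
  assume "\<phi> \<in> learners"
  then obtain ys where "ennreal (epoch_regret_bound K L d)
      \<le> (\<integral>\<^sup>+x. e2ennreal (worst_regret (color_threshold_class d) T \<phi> x) \<partial>colored_process ys)"
    using colored_process_regret_ge by blast
  moreover have "ennreal (sqrt (real K * real d * real T / 64)) \<le> ennreal (epoch_regret_bound K L d)"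
    using sqrt_le_epoch_regret_bound[OF assms(1) \<open>d \<le> L\<close> L(3)] by (rule ennreal_leI)
  ultimately show "\<exists>\<nu>\<in>U_K1 (count_space UNIV) T K.
      ennreal (sqrt (real K * real d * real T / 64)) \<le> (\<integral>\<^sup>+x. e2ennreal (worst_regret (color_threshold_class d) T \<phi> x) \<partial>\<nu>)"
    using colored_process_in_U_K1 by (meson order_trans)
qed

lemma minimax_regret_threshold_class_ge:
  assumes "1 \<le> K" "K \<le> T"
  shows "ennreal ((1/8) * sqrt (real K * real T)) \<le> minimax_regret (restrict_space borel {0..1}) threshold_class T K"
proof (rule minimax_regret_ge)
  define L where "L = T div K"
  note L = epoch_length_bounds[OF assms, folded L_def]
  fix \<phi> :: "nat \<Rightarrow> (nat \<Rightarrow> real) \<Rightarrow> (nat \<Rightarrow> real) \<Rightarrow> real"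
  assume "\<phi> \<in> learners"
  then obtain \<nu> where "\<nu> \<in> U_K1 (restrict_space borel {0..1}) T K"
    and "ennreal (epoch_regret_bound K L 1) \<le> (\<integral>\<^sup>+x. e2ennreal (worst_regret threshold_class T \<phi> x) \<partial>\<nu>)"
    using threshold_process_regret_ge[OF assms(1) L(1,2)] by blast
  moreover have "(1/8) * sqrt (real K * real T) = sqrt (real K * real 1 * real T / 64)"
    by (simp add: real_sqrt_divide)
  then have "ennreal ((1/8) * sqrt (real K * real T)) \<le> ennreal (epoch_regret_bound K L 1)"
    using sqrt_le_epoch_regret_bound[of 1 L T K] L by (intro ennreal_leI) simp
  ultimately show "\<exists>\<nu>\<in>U_K1 (restrict_space borel {0..1}) T K.
      ennreal ((1/8) * sqrt (real K * real T)) \<le> (\<integral>\<^sup>+x. e2ennreal (worst_regret threshold_class T \<phi> x) \<partial>\<nu>)"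
    by (meson order_trans)
qed

theorem theorem8:
  shows "(\<forall>d K T :: nat. 1 \<le> d \<and> 1 \<le> K \<and> 8 * real K * real d * ln (2 * real K * real d) \<le> real T \<longrightarrow>
            (\<exists>(X :: nat set) (H :: (nat \<Rightarrow> real) set).
               binary_class X H \<and> VC_le X H d \<and>
               minimax_regret (count_space X) H T K \<ge> ennreal (sqrt (real K * real d * real T / 64))))
       \<and> (\<exists>c::real. c > 0 \<and>
            (\<forall>K T :: nat. 1 \<le> K \<and> K \<le> T \<longrightarrow>
               minimax_regret (restrict_space borel {0..1::real}) threshold_class T K
                 \<ge> ennreal (c * sqrt (real K * real T))))"
proof (intro conjI allI impI)
  fix d K T :: nat
  assume "1 \<le> d \<and> 1 \<le> K \<and> 8 * real K * real d * ln (2 * real K * real d) \<le> real T"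
  then have "1 \<le> d" "1 \<le> K" "K * d \<le> T"
    using mult_le_of_log_bound by auto
  then show "\<exists>(X :: nat set) (H :: (nat \<Rightarrow> real) set). binary_class X H \<and> VC_le X H d \<and>
      minimax_regret (count_space X) H T K \<ge> ennreal (sqrt (real K * real d * real T / 64))"
    using binary_color_threshold_class VC_le_color_threshold_class minimax_regret_color_threshold_class_ge
    by blast
next
  show "\<exists>c::real. c > 0 \<and> (\<forall>K T :: nat. 1 \<le> K \<and> K \<le> T \<longrightarrow>
      minimax_regret (restrict_space borel {0..1::real}) threshold_class T K \<ge> ennreal (c * sqrt (real K * real T)))"
    using minimax_regret_threshold_class_ge by (intro exI[of _ "1/8"]) auto
qed

end
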